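(* Let $d=2b$ be even, $d\geq 4$. Then every half-edge of every $d$-branching mobile has even weight (in $\{0,\dots,d-2\}$). Similarly, for every face-rooted $d$-angulation admitting a $d/(d-2)$-orientation, its minimal $d/(d-2)$-orientation has only even weights.
   Context: A map is a connected finite graph (loops and multiple edges allowed) embedded in the oriented sphere up to orientation-preserving homeomorphism; a $d$-angulation has all faces of degree $d$. A face-rooted map has a marked root-face; vertices and edges incident to it are outer, others inner. A biorientation assigns to each half-edge a direction (ingoing toward its vertex, or outgoing); an edge is $i$-way if $i$ of its half-edges are ingoing. Directed paths follow 2-way edges or 1-way edges toward their ingoing half-edge; a circuit is a simple closed directed path; it is counterclockwise if the root-face is on its right; a biorientation is minimal if it has no counterclockwise circuit. An $\mathbb N$-biorientation gives weights in $\{0,1,2,\dots\}$ to half-edges, positive on ingoing and zero on outgoing ones; edge weight = sum of the two half-edge weights; vertex weight = sum of weights of incident ingoing half-edges. A $d/(d-2)$-orientation of a face-rooted $d$-angulation is an $\mathbb N$-biorientation with inner edges of weight $d-2$, inner vertices of weight $d$, outer edges of weight $1$, outer vertices of weight $1$; if one exists, there is a unique minimal one. A mobile is a plane tree whose vertices are black or white (not necessarily properly), black vertices possibly carrying dangling half-edges (buds). An $\mathbb N$-mobile gives each non-bud half-edge a weight in $\{0,1,2,\dots\}$, positive if incident to a white vertex, zero if incident to a black vertex; vertex weight = sum of weights of incident non-bud half-edges; black-vertex degree counts buds. A $d$-branching mobile is an $\mathbb N$-mobile with all black vertices of degree $d$, all white vertices of weight $d$, all edges of weight $d-2$. *)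

theory Defs
  imports "HOL-Combinatorics.Permutations" "HOL-Combinatorics.Orbits"
begin

text \<open>A map is encoded by a finite set of half-edges (darts) D, a fixed-point-free
involution alpha (pairing the two half-edges of an edge) and a permutation sigma
(the counterclockwise rotation of the half-edges around their vertex).
With this convention the face containing dart h (as an orbit of sigma o alpha) is the face
lying on the right of h when h is traversed from its vertex towards the other end.\<close>

definition verts :: "'d set \<Rightarrow> ('d \<Rightarrow> 'd) \<Rightarrow> 'd set set" where
  "verts D \<sigma> = orbit \<sigma> ` D"

definition edges :: "'d set \<Rightarrow> ('d \<Rightarrow> 'd) \<Rightarrow> 'd set set" where
  "edges D \<alpha> = orbit \<alpha> ` D"

definition faces :: "'d set \<Rightarrow> ('d \<Rightarrow> 'd) \<Rightarrow> ('d \<Rightarrow> 'd) \<Rightarrow> 'd set set" where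
  "faces D \<alpha> \<sigma> = orbit (\<sigma> \<circ> \<alpha>) ` D"

definition map_conn :: "'d set \<Rightarrow> ('d \<Rightarrow> 'd) \<Rightarrow> ('d \<Rightarrow> 'd) \<Rightarrow> ('d \<times> 'd) set" where
  "map_conn D \<alpha> \<sigma> = {(x, y). x \<in> D \<and> y \<in> D \<and> (y = \<alpha> x \<or> y = \<sigma> x)}"

text \<open>A (connected) map embedded in the oriented sphere: Euler characteristic 2.\<close>
definition planar_map :: "'d set \<Rightarrow> ('d \<Rightarrow> 'd) \<Rightarrow> ('d \<Rightarrow> 'd) \<Rightarrow> bool" where
  "planar_map D \<alpha> \<sigma> \<longleftrightarrow>
     finite D \<and> D \<noteq> {} \<and>
     \<alpha> permutes D \<and> (\<forall>h\<in>D. \<alpha> (\<alpha> h) = h \<and> \<alpha> h \<noteq> h) \<and>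
     \<sigma> permutes D \<and>
     (\<forall>x\<in>D. \<forall>y\<in>D. (x, y) \<in> (map_conn D \<alpha> \<sigma>)\<^sup>*) \<and>
     card (verts D \<sigma>) + card (faces D \<alpha> \<sigma>) = card (edges D \<alpha>) + 2"

definition rooted_dangulation ::
  "nat \<Rightarrow> 'd set \<Rightarrow> ('d \<Rightarrow> 'd) \<Rightarrow> ('d \<Rightarrow> 'd) \<Rightarrow> 'd set \<Rightarrow> bool" where
  "rooted_dangulation d D \<alpha> \<sigma> r \<longleftrightarrow>
     planar_map D \<alpha> \<sigma> \<and> (\<forall>f\<in>faces D \<alpha> \<sigma>. card f = d) \<and> r \<in> faces D \<alpha> \<sigma>"

definition outer_dart :: "('d \<Rightarrow> 'd) \<Rightarrow> 'd set \<Rightarrow> 'd \<Rightarrow> bool" where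
  "outer_dart \<alpha> r h \<longleftrightarrow> orbit \<alpha> h \<inter> r \<noteq> {}"

definition outer_vertex :: "'d set \<Rightarrow> 'd set \<Rightarrow> bool" where
  "outer_vertex r v \<longleftrightarrow> v \<inter> r \<noteq> {}"

text \<open>An N-biorientation is a weight function w on half-edges; a half-edge is
ingoing iff its weight is positive.  d/(d-2)-orientation:\<close>
definition dd2_orientation ::
  "nat \<Rightarrow> 'd set \<Rightarrow> ('d \<Rightarrow> 'd) \<Rightarrow> ('d \<Rightarrow> 'd) \<Rightarrow> 'd set \<Rightarrow> ('d \<Rightarrow> nat) \<Rightarrow> bool" where
  "dd2_orientation d D \<alpha> \<sigma> r w \<longleftrightarrow>
     (\<forall>h\<in>D. w h + w (\<alpha> h) = (if outer_dart \<alpha> r h then 1 else d - 2)) \<and>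
     (\<forall>v\<in>verts D \<sigma>. (\<Sum>h\<in>v. w h) = (if outer_vertex r v then 1 else d))"

text \<open>Circuits: a list of darts hs = [h_0,...,h_(k-1)], where h_i leaves vertex v_i and
arrives at v_(i+1) (indices mod k) through the half-edge alpha h_i, which must be
ingoing (this covers 2-way edges and 1-way edges traversed towards their ingoing
half-edge); the vertices are pairwise distinct and the edges pairwise distinct.\<close>
definition directed_circuit ::
  "'d set \<Rightarrow> ('d \<Rightarrow> 'd) \<Rightarrow> ('d \<Rightarrow> 'd) \<Rightarrow> ('d \<Rightarrow> nat) \<Rightarrow> 'd list \<Rightarrow> bool" where
  "directed_circuit D \<alpha> \<sigma> w hs \<longleftrightarrow>
     hs \<noteq> [] \<and> set hs \<subseteq> D \<and>
     (\<forall>i<length hs. 0 < w (\<alpha> (hs ! i)) \<and>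
        orbit \<sigma> (hs ! ((i + 1) mod length hs)) = orbit \<sigma> (\<alpha> (hs ! i))) \<and>
     (\<forall>i<length hs. \<forall>j<length hs. i \<noteq> j \<longrightarrow>
        orbit \<sigma> (hs ! i) \<noteq> orbit \<sigma> (hs ! j) \<and> hs ! j \<noteq> \<alpha> (hs ! i))"

text \<open>Darts lying on the right side of a simple cycle whose set of darts is C:
start from the faces on the right of the cycle darts, close under walking along
faces and under crossing edges that are not edges of the cycle.\<close>
inductive_set right_side ::
  "('d \<Rightarrow> 'd) \<Rightarrow> ('d \<Rightarrow> 'd) \<Rightarrow> 'd set \<Rightarrow> 'd set" for \<alpha> \<sigma> C where
  base: "h \<in> C \<Longrightarrow> h \<in> right_side \<alpha> \<sigma> C"
| face: "g \<in> right_side \<alpha> \<sigma> C \<Longrightarrow> \<sigma> (\<alpha> g) \<in> right_side \<alpha> \<sigma> C"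
| cross: "g \<in> right_side \<alpha> \<sigma> C \<Longrightarrow> g \<notin> C \<Longrightarrow> \<alpha> g \<notin> C \<Longrightarrow> \<alpha> g \<in> right_side \<alpha> \<sigma> C"

definition ccw_circuit ::
  "'d set \<Rightarrow> ('d \<Rightarrow> 'd) \<Rightarrow> ('d \<Rightarrow> 'd) \<Rightarrow> 'd set \<Rightarrow> ('d \<Rightarrow> nat) \<Rightarrow> 'd list \<Rightarrow> bool" where
  "ccw_circuit D \<alpha> \<sigma> r w hs \<longleftrightarrow>
     directed_circuit D \<alpha> \<sigma> w hs \<and> r \<inter> right_side \<alpha> \<sigma> (set hs) \<noteq> {}"

definition minimal_orientation ::
  "'d set \<Rightarrow> ('d \<Rightarrow> 'd) \<Rightarrow> ('d \<Rightarrow> 'd) \<Rightarrow> 'd set \<Rightarrow> ('d \<Rightarrow> nat) \<Rightarrow> bool" where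
  "minimal_orientation D \<alpha> \<sigma> r w \<longleftrightarrow> \<not> (\<exists>hs. ccw_circuit D \<alpha> \<sigma> r w hs)"

text \<open>A mobile: darts D (including buds B), sigma the rotation around vertices
(vertices = sigma-orbits), alpha a fixed-point-free involution on the non-bud darts
D - B (edges), black : vertex colouring (True = black).  The underlying plane
tree: connected and #vertices = #edges + 1. Buds only at black vertices.
w gives weights to the non-bud half-edges.\<close>

definition mob_conn :: "'d set \<Rightarrow> 'd set \<Rightarrow> ('d \<Rightarrow> 'd) \<Rightarrow> ('d \<Rightarrow> 'd) \<Rightarrow> ('d \<times> 'd) set" where
  "mob_conn D B \<alpha> \<sigma> = {(x, y). x \<in> D \<and> y \<in> D \<and> (y = \<sigma> x \<or> (x \<notin> B \<and> y = \<alpha> x))}"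

definition mobile ::
  "'d set \<Rightarrow> 'd set \<Rightarrow> ('d \<Rightarrow> 'd) \<Rightarrow> ('d \<Rightarrow> 'd) \<Rightarrow> ('d set \<Rightarrow> bool) \<Rightarrow> bool" where
  "mobile D B \<alpha> \<sigma> black \<longleftrightarrow>
     finite D \<and> D \<noteq> {} \<and> B \<subseteq> D \<and>
     \<alpha> permutes (D - B) \<and> (\<forall>h\<in>D - B. \<alpha> (\<alpha> h) = h \<and> \<alpha> h \<noteq> h) \<and>
     \<sigma> permutes D \<and>
     (\<forall>x\<in>D. \<forall>y\<in>D. (x, y) \<in> (mob_conn D B \<alpha> \<sigma>)\<^sup>*) \<and>
     card (verts D \<sigma>) = card (edges (D - B) \<alpha>) + 1 \<and>
     (\<forall>h\<in>B. black (orbit \<sigma> h))"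

definition N_mobile ::
  "'d set \<Rightarrow> 'd set \<Rightarrow> ('d \<Rightarrow> 'd) \<Rightarrow> ('d \<Rightarrow> 'd) \<Rightarrow> ('d set \<Rightarrow> bool) \<Rightarrow> ('d \<Rightarrow> nat) \<Rightarrow> bool" where
  "N_mobile D B \<alpha> \<sigma> black w \<longleftrightarrow>
     mobile D B \<alpha> \<sigma> black \<and>
     (\<forall>h\<in>D - B. if black (orbit \<sigma> h) then w h = 0 else 0 < w h)"

definition branching_mobile ::
  "nat \<Rightarrow> 'd set \<Rightarrow> 'd set \<Rightarrow> ('d \<Rightarrow> 'd) \<Rightarrow> ('d \<Rightarrow> 'd) \<Rightarrow> ('d set \<Rightarrow> bool) \<Rightarrow> ('d \<Rightarrow> nat) \<Rightarrow> bool" where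
  "branching_mobile d D B \<alpha> \<sigma> black w \<longleftrightarrow>
     N_mobile D B \<alpha> \<sigma> black w \<and>
     (\<forall>v\<in>verts D \<sigma>. if black v then card v = d else (\<Sum>h\<in>v - B. w h) = d) \<and>
     (\<forall>h\<in>D - B. w h + w (\<alpha> h) = d - 2)"

end

theory Submission
  imports Defs
begin

text \<open>Since d - 2 is even, an edge of weight d - 2 has either two half-edges of odd weight or none,
  so the odd half-edges form a set closed under the edge involution. A vertex carrying one of them
  has even weight d (white vertices of a mobile; inner vertices of the d-angulation, because Euler's
  formula forces all the weight of outer vertices onto outer edges), so it carries at least two.
  Hence the odd half-edges span a subgraph of minimum degree two, which contains a cycle. A mobile
  is a tree, which is absurd. In the d-angulation all these half-edges are ingoing, so the cycle is
  a circuit in both directions, and one of the two has the root face on its right, contradicting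
  minimality.\<close>

lemma permutation_orbit_eq:
  assumes "permutation f" "y \<in> orbit f x"
  shows "orbit f y = orbit f x"
  using assms by (meson cyclic_on_orbit' orbit_cyclic_eq3)

lemma orbit_involution:
  assumes "f (f x) = x"
  shows "orbit f x = {x, f x}"
proof
  show "orbit f x \<subseteq> {x, f x}"
  proof
    fix y assume "y \<in> orbit f x"
    then show "y \<in> {x, f x}" by induction (use assms in auto)
  qed
  show "{x, f x} \<subseteq> orbit f x"
    using orbit.base[of f x] orbit.step[of "f x" f x] assms by auto
qed

lemma sum_over_orbits:
  assumes perm: "permutation f" and "finite A" and closed: "\<And>x. x \<in> A \<Longrightarrow> orbit f x \<subseteq> A"
  shows "sum g A = (\<Sum>Q\<in>orbit f ` A. sum g Q)"
proof -
  have "\<Union> (orbit f ` A) = A"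
    using closed permutation_self_in_orbit[OF perm] by blast
  moreover have "sum g (\<Union> (orbit f ` A)) = (\<Sum>Q\<in>orbit f ` A. sum g Q)"
  proof (rule sum.Union_disjoint[unfolded comp_def])
    show "\<forall>Q\<in>orbit f ` A. finite Q" using closed \<open>finite A\<close> finite_subset by blast
    show "\<forall>Q\<in>orbit f ` A. \<forall>Q'\<in>orbit f ` A. Q \<noteq> Q' \<longrightarrow> Q \<inter> Q' = {}"
      using permutation_orbit_eq[OF perm] by blast
  qed
  ultimately show ?thesis by simp
qed

lemma even_sum_iff_even_card_odd:
  fixes w :: "'a \<Rightarrow> nat"
  assumes "finite A"
  shows "even (sum w A) \<longleftrightarrow> even (card {x\<in>A. odd (w x)})"
  using assms
proof (induction A rule: finite_induct)
  case (insert a A)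
  have "{x\<in>insert a A. odd (w x)} =
      (if odd (w a) then insert a {x\<in>A. odd (w x)} else {x\<in>A. odd (w x)})"
    by auto
  then show ?case using insert by auto
qed simp

lemma even_sum_odd_partner:
  fixes w :: "'a \<Rightarrow> nat"
  assumes "finite A" "even (sum w A)" "h \<in> A" "odd (w h)"
  obtains g where "g \<in> A" "odd (w g)" "g \<noteq> h"
proof -
  let ?O = "{x\<in>A. odd (w x)}"
  have "even (card ?O)" using even_sum_iff_even_card_odd[OF assms(1)] assms(2) by blast
  moreover have "h \<in> ?O" using assms by simp
  ultimately have "?O \<noteq> {h}" by auto
  then show ?thesis using that \<open>h \<in> ?O\<close> by blast
qed

lemma mod_successor_symmetric:
  fixes i j k :: nat
  assumes "i < k" "j < k" "i \<noteq> j" "j = (i + 1) mod k" "i = (j + 1) mod k"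
  shows "k = 2"
proof (cases "i + 1 < k")
  case True
  then have "j = i + 1" using assms(4) by simp
  then have "i = (i + 2) mod k" using assms(5) by simp
  moreover have "i + 2 = k"
  proof (rule ccontr)
    assume "i + 2 \<noteq> k"
    then have "(i + 2) mod k = i + 2" using True by simp
    then show False using \<open>i = (i + 2) mod k\<close> by simp
  qed
  ultimately show ?thesis by simp
next
  case False
  then have "i + 1 = k" using assms(1) by simp
  moreover have "j = 0" using assms(4) \<open>i + 1 = k\<close> by simp
  ultimately show ?thesis using assms(3,5) by (cases "k = 1") auto
qed

lemma directed_circuitI:
  assumes invol: "\<And>h. h \<in> D \<Longrightarrow> \<alpha> (\<alpha> h) = h"
    and "hs \<noteq> []" "set hs \<subseteq> D"
    and pos: "\<And>i. i < length hs \<Longrightarrow> 0 < w (\<alpha> (hs ! i))"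
    and adj: "\<And>i. i < length hs \<Longrightarrow>
                orbit \<sigma> (hs ! ((i + 1) mod length hs)) = orbit \<sigma> (\<alpha> (hs ! i))"
    and dist: "distinct (map (orbit \<sigma>) hs)"
    and no_backtrack: "\<And>i. Suc i < length hs \<Longrightarrow> hs ! Suc i \<noteq> \<alpha> (hs ! i)"
  shows "directed_circuit D \<alpha> \<sigma> w hs"
  unfolding directed_circuit_def
proof (intro conjI allI impI)
  fix i j assume ij: "i < length hs" "j < length hs" "i \<noteq> j"
  have vertex_inj: "orbit \<sigma> (hs ! a) = orbit \<sigma> (hs ! b) \<Longrightarrow> a < length hs \<Longrightarrow> b < length hs \<Longrightarrow> a = b"
    for a b using dist by (auto simp: distinct_conv_nth)
  then show "orbit \<sigma> (hs ! i) \<noteq> orbit \<sigma> (hs ! j)" using ij by blast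
  \<comment> \<open>An edge used twice would make positions i and j cyclic successors of each other, which
    forces length 2, where it is excluded by the absence of backtracking.\<close>
  show "hs ! j \<noteq> \<alpha> (hs ! i)"
  proof
    assume ji: "hs ! j = \<alpha> (hs ! i)"
    then have ij': "hs ! i = \<alpha> (hs ! j)" using invol \<open>set hs \<subseteq> D\<close> ij by (metis nth_mem subsetD)
    have "j = (i + 1) mod length hs" using vertex_inj adj ij ji by (simp add: \<open>hs \<noteq> []\<close>)
    moreover have "i = (j + 1) mod length hs" using vertex_inj adj ij ij' by (simp add: \<open>hs \<noteq> []\<close>)
    ultimately have "length hs = 2" using mod_successor_symmetric ij by blast
    then have "hs ! 1 = \<alpha> (hs ! 0)" using ij ji ij' by (cases i; cases j) auto
    then show False using no_backtrack[of 0] \<open>length hs = 2\<close> by simp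
  qed
qed (use assms in auto)

lemma exists_directed_circuit:
  assumes perm: "permutation \<sigma>" and invol: "\<And>h. h \<in> D \<Longrightarrow> \<alpha> (\<alpha> h) = h"
    and "finite S" "S \<subseteq> D" "S \<noteq> {}"
    and closed: "\<And>h. h \<in> S \<Longrightarrow> \<alpha> h \<in> S" and pos: "\<And>h. h \<in> S \<Longrightarrow> 0 < w h"
    and branch: "\<And>h. h \<in> S \<Longrightarrow> \<exists>g\<in>S. g \<in> orbit \<sigma> h \<and> g \<noteq> h"
  obtains hs where "directed_circuit D \<alpha> \<sigma> w hs" "set hs \<subseteq> S"
proof -
  define succ where "succ h = (SOME g. g \<in> S \<and> g \<in> orbit \<sigma> (\<alpha> h) \<and> g \<noteq> \<alpha> h)" for h
  have succ: "succ h \<in> S \<and> orbit \<sigma> (succ h) = orbit \<sigma> (\<alpha> h) \<and> succ h \<noteq> \<alpha> h"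
    if "h \<in> S" for h
  proof -
    have "\<exists>g. g \<in> S \<and> g \<in> orbit \<sigma> (\<alpha> h) \<and> g \<noteq> \<alpha> h" using branch closed that by blast
    from someI_ex[OF this] show ?thesis
      unfolding succ_def using permutation_orbit_eq[OF perm] by blast
  qed
  obtain h0 where "h0 \<in> S" using \<open>S \<noteq> {}\<close> by blast
  define x where "x n = (succ ^^ n) h0" for n
  have xS: "x n \<in> S" for n
    by (induction n) (use \<open>h0 \<in> S\<close> succ in \<open>auto simp: x_def\<close>)
  have x_step: "orbit \<sigma> (x (Suc n)) = orbit \<sigma> (\<alpha> (x n))" "x (Suc n) \<noteq> \<alpha> (x n)" for n
    using succ[OF xS[of n]] by (simp_all add: x_def)
  define V where "V n = orbit \<sigma> (x n)" for n
  \<comment> \<open>The walk visits finitely many vertices, so some vertex repeats; cut at the first repetition.\<close>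
  have "\<not> inj V"
  proof
    assume "inj V"
    moreover have "range V \<subseteq> orbit \<sigma> ` S" using xS by (auto simp: V_def)
    then have "finite (range V)" using \<open>finite S\<close> finite_subset by blast
    ultimately show False using finite_imageD by blast
  qed
  then obtain a b where "V a = V b" "a \<noteq> b" unfolding inj_def by blast
  then have "\<exists>j. \<exists>i<j. V i = V j" by (cases a b rule: linorder_cases) auto
  define j where "j = (LEAST j. \<exists>i<j. V i = V j)"
  obtain i where ij: "i < j" "V i = V j" using LeastI_ex[OF \<open>\<exists>j. \<exists>i<j. V i = V j\<close>] j_def by blast
  have V_inj: "V a \<noteq> V b" if "a < b" "b < j" for a b
    using not_less_Least[of b "\<lambda>j. \<exists>i<j. V i = V j"] that j_def by blast
  define hs where "hs = map x [i..<j]"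
  have len: "length hs = j - i" and nth: "\<And>k. k < j - i \<Longrightarrow> hs ! k = x (i + k)"
    by (simp_all add: hs_def)
  have "directed_circuit D \<alpha> \<sigma> w hs"
  proof (rule directed_circuitI[OF invol])
    show "hs \<noteq> []" "set hs \<subseteq> D" using ij xS \<open>S \<subseteq> D\<close> by (auto simp: hs_def)
    show "0 < w (\<alpha> (hs ! k))" if "k < length hs" for k
      using that len nth pos closed xS by simp
    show "orbit \<sigma> (hs ! ((k + 1) mod length hs)) = orbit \<sigma> (\<alpha> (hs ! k))"
      if "k < length hs" for k
    proof (cases "k + 1 < j - i")
      case True
      then show ?thesis using x_step(1)[of "i + k"] nth len by simp
    next
      case False
      then have "Suc (i + k) = j" "k + 1 = j - i" using that len ij by simp_all
      then show ?thesis using ij x_step(1)[of "i + k"] nth len by (simp add: V_def)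
    qed
    show "distinct (map (orbit \<sigma>) hs)"
    proof -
      have "inj_on V {i..<j}"
      proof (rule inj_onI)
        fix a b assume "a \<in> {i..<j}" "b \<in> {i..<j}" "V a = V b"
        then show "a = b" using V_inj[of a b] V_inj[of b a] by (cases a b rule: linorder_cases) auto
      qed
      moreover have "map (orbit \<sigma>) hs = map V [i..<j]" by (simp add: hs_def V_def)
      ultimately show ?thesis by (simp add: distinct_map)
    qed
    show "hs ! Suc k \<noteq> \<alpha> (hs ! k)" if "Suc k < length hs" for k
      using that x_step(2)[of "i + k"] nth len by simp
  qed
  moreover have "set hs \<subseteq> S" using xS by (auto simp: hs_def)
  ultimately show ?thesis using that by blast
qed

lemma directed_circuit_reverse:
  assumes circ: "directed_circuit D \<alpha> \<sigma> w hs"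
    and pos: "\<And>h. h \<in> set hs \<Longrightarrow> 0 < w h"
    and invol: "\<And>h. h \<in> D \<Longrightarrow> \<alpha> (\<alpha> h) = h" and closed: "\<And>h. h \<in> D \<Longrightarrow> \<alpha> h \<in> D"
  shows "directed_circuit D \<alpha> \<sigma> w (rev (map \<alpha> hs))"
proof -
  define k where "k = length hs"
  have "hs \<noteq> []" and hsD: "set hs \<subseteq> D"
    and adj: "\<And>i. i < k \<Longrightarrow> orbit \<sigma> (hs ! ((i + 1) mod k)) = orbit \<sigma> (\<alpha> (hs ! i))"
    and dist: "\<And>i j. i < k \<Longrightarrow> j < k \<Longrightarrow> i \<noteq> j \<Longrightarrow>
                 orbit \<sigma> (hs ! i) \<noteq> orbit \<sigma> (hs ! j) \<and> hs ! j \<noteq> \<alpha> (hs ! i)"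
    using circ unfolding directed_circuit_def k_def by auto
  then have "0 < k" by (simp add: k_def)
  define rs where "rs = rev (map \<alpha> hs)"
  have len: "length rs = k" by (simp add: rs_def k_def)
  have nth: "rs ! i = \<alpha> (hs ! (k - 1 - i))" if "i < k" for i
    using that by (simp add: rs_def k_def rev_nth)
  have nthD: "hs ! i \<in> D" if "i < k" for i using hsD that k_def by auto
  show ?thesis unfolding rs_def[symmetric]
  proof (rule directed_circuitI[OF invol])
    show "rs \<noteq> []" "set rs \<subseteq> D" using \<open>hs \<noteq> []\<close> hsD closed by (auto simp: rs_def)
    show "0 < w (\<alpha> (rs ! i))" if "i < length rs" for i
      using that pos nth nthD invol len k_def by (simp add: nth_mem)
    show "orbit \<sigma> (rs ! ((i + 1) mod length rs)) = orbit \<sigma> (\<alpha> (rs ! i))"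
      if "i < length rs" for i
    proof (cases "i + 1 < k")
      case True
      have "k - 2 - i + 1 = k - 1 - i" using True by simp
      then show ?thesis using adj[of "k - 2 - i"] True nth[of i] nth[of "i + 1"] len invol nthD
        by (simp add: numeral_2_eq_2)
    next
      case False
      then have "i = k - 1" using that len by simp
      then show ?thesis using adj[of "k - 1"] \<open>0 < k\<close> nth[of 0] nth[of "k - 1"] len invol nthD
        by simp
    qed
    \<comment> \<open>The vertices of the reversed circuit are those of the original one, rotated once and
      read backwards.\<close>
    have "map (orbit \<sigma> \<circ> \<alpha>) hs = rotate1 (map (orbit \<sigma>) hs)"
      by (rule nth_equalityI) (use adj \<open>0 < k\<close> in \<open>auto simp: nth_rotate1 k_def\<close>)
    moreover have "distinct (map (orbit \<sigma>) hs)"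
      using dist unfolding distinct_conv_nth k_def by auto
    ultimately show "distinct (map (orbit \<sigma>) rs)" by (simp add: rs_def rev_map[symmetric])
    show "rs ! Suc i \<noteq> \<alpha> (rs ! i)" if "Suc i < length rs" for i
    proof
      assume "rs ! Suc i = \<alpha> (rs ! i)"
      then have "hs ! (k - 1 - i) = \<alpha> (hs ! (k - 1 - Suc i))"
        using that len nth[of i] nth[of "Suc i"] invol nthD by simp
      moreover have "k - 1 - Suc i \<noteq> k - 1 - i" "k - 1 - i < k" using that len by simp_all
      ultimately show False using dist[of "k - 1 - Suc i" "k - 1 - i"] by simp
    qed
  qed
qed

lemma right_side_cover:
  assumes conn: "\<forall>x\<in>D. \<forall>y\<in>D. (x, y) \<in> (map_conn D \<alpha> \<sigma>)\<^sup>*"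
    and invol: "\<And>h. h \<in> D \<Longrightarrow> \<alpha> (\<alpha> h) = h"
    and "C \<subseteq> D" "c \<in> C" "y \<in> D"
  shows "y \<in> right_side \<alpha> \<sigma> C \<union> right_side \<alpha> \<sigma> (\<alpha> ` C)"
proof -
  define T where "T = right_side \<alpha> \<sigma> C \<union> right_side \<alpha> \<sigma> (\<alpha> ` C)"
  have \<alpha>_closed: "\<alpha> x \<in> T" if "x \<in> T" "x \<in> D" for x
  proof (cases "x \<in> C \<or> \<alpha> x \<in> C \<or> x \<in> \<alpha> ` C \<or> \<alpha> x \<in> \<alpha> ` C")
    case True
    moreover have "\<alpha> (\<alpha> c) = c" if "c \<in> C" for c using invol \<open>C \<subseteq> D\<close> that by blast
    ultimately show ?thesis by (force simp: T_def intro: right_side.base)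
  next
    case False
    then show ?thesis using \<open>x \<in> T\<close> by (auto simp: T_def intro: right_side.cross)
  qed
  have "(c, y) \<in> (map_conn D \<alpha> \<sigma>)\<^sup>*" using conn assms(3-5) by auto
  then have "y \<in> T \<and> y \<in> D"
  proof (induction rule: rtrancl_induct)
    case base
    then show ?case using assms(3,4) by (auto simp: T_def intro: right_side.base)
  next
    case (step x z)
    then have "z \<in> D" "z = \<alpha> x \<or> z = \<sigma> x" by (auto simp: map_conn_def)
    moreover have "\<alpha> x \<in> T" using \<alpha>_closed step by blast
    moreover have "\<sigma> (\<alpha> (\<alpha> x)) \<in> T" using \<open>\<alpha> x \<in> T\<close> by (auto simp: T_def intro: right_side.face)
    ultimately show ?case using invol step by auto
  qed
  then show ?thesis by (simp add: T_def)
qed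

lemma mobile_descending_parents:
  assumes mob: "mobile D B \<alpha> \<sigma> black" and "x0 \<in> D"
  obtains \<rho> :: "'d set \<Rightarrow> nat" and par :: "'d set \<Rightarrow> 'd"
  where "\<And>u. u \<in> verts D \<sigma> - {orbit \<sigma> x0} \<Longrightarrow>
           par u \<in> u \<and> par u \<in> D - B \<and> \<rho> (orbit \<sigma> (\<alpha> (par u))) < \<rho> u"
proof -
  have "finite D" "\<sigma> permutes D" "\<alpha> permutes (D - B)"
    and invol: "\<And>h. h \<in> D - B \<Longrightarrow> \<alpha> (\<alpha> h) = h"
    and conn: "\<And>x y. x \<in> D \<Longrightarrow> y \<in> D \<Longrightarrow> (x, y) \<in> (mob_conn D B \<alpha> \<sigma>)\<^sup>*"
    using mob unfolding mobile_def by blast+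
  then have perm: "permutation \<sigma>" by (simp add: permutes_imp_permutation)
  define v0 where "v0 = orbit \<sigma> x0"
  define Q where "Q = {(orbit \<sigma> h, orbit \<sigma> (\<alpha> h)) | h. h \<in> D - B}"
  have reach: "(v0, orbit \<sigma> y) \<in> Q\<^sup>*" if "y \<in> D" for y
  proof -
    have "(x0, y) \<in> (mob_conn D B \<alpha> \<sigma>)\<^sup>*" using conn \<open>x0 \<in> D\<close> that by blast
    then show ?thesis
    proof (induction rule: rtrancl_induct)
      case (step y z)
      then have "y \<in> D" "z = \<sigma> y \<or> (y \<notin> B \<and> z = \<alpha> y)" by (auto simp: mob_conn_def)
      then have "orbit \<sigma> z = orbit \<sigma> y \<or> (orbit \<sigma> y, orbit \<sigma> z) \<in> Q"
        using permutation_orbit_step[OF perm] by (auto simp: Q_def)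
      then show ?case using step.IH by (metis rtrancl.rtrancl_into_rtrancl)
    qed (simp add: v0_def)
  qed
  define \<rho> where "\<rho> u = (LEAST n. (v0, u) \<in> Q ^^ n)" for u
  have parent: "\<exists>c. c \<in> u \<and> c \<in> D - B \<and> \<rho> (orbit \<sigma> (\<alpha> c)) < \<rho> u"
    if u: "u \<in> verts D \<sigma>" "u \<noteq> v0" for u
  proof -
    obtain y where "y \<in> D" "u = orbit \<sigma> y" using u(1) by (auto simp: verts_def)
    then have "\<exists>n. (v0, u) \<in> Q ^^ n" using reach by (simp add: rtrancl_power)
    then have "(v0, u) \<in> Q ^^ \<rho> u" unfolding \<rho>_def by (rule LeastI_ex)
    moreover obtain m where m: "\<rho> u = Suc m"
      using \<open>(v0, u) \<in> Q ^^ \<rho> u\<close> u(2) by (cases "\<rho> u") auto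
    ultimately obtain u' where "(v0, u') \<in> Q ^^ m" "(u', u) \<in> Q"
      by (auto elim: relpow_Suc_E)
    then obtain h where h: "h \<in> D - B" "u' = orbit \<sigma> h" "u = orbit \<sigma> (\<alpha> h)"
      by (auto simp: Q_def)
    have "\<rho> (orbit \<sigma> (\<alpha> (\<alpha> h))) \<le> m"
      using invol[OF h(1)] h(2) \<open>(v0, u') \<in> Q ^^ m\<close> unfolding \<rho>_def by (simp add: Least_le)
    moreover have "\<alpha> h \<in> u" "\<alpha> h \<in> D - B"
      using h permutation_self_in_orbit[OF perm] permutes_in_image[OF \<open>\<alpha> permutes (D - B)\<close>]
      by auto
    ultimately show ?thesis using m by (intro exI[of _ "\<alpha> h"]) simp
  qed
  define par where "par u = (SOME c. c \<in> u \<and> c \<in> D - B \<and> \<rho> (orbit \<sigma> (\<alpha> c)) < \<rho> u)" for u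
  show ?thesis
    by (rule that[of par \<rho>]) (use someI_ex[OF parent] in \<open>auto simp: par_def v0_def\<close>)
qed

lemma mobile_edge_is_parent_edge:
  fixes \<rho> :: "'d set \<Rightarrow> 'r::preorder"
  assumes mob: "mobile D B \<alpha> \<sigma> black" and "v0 \<in> verts D \<sigma>"
    and par: "\<And>u. u \<in> verts D \<sigma> - {v0} \<Longrightarrow>
                par u \<in> u \<and> par u \<in> D - B \<and> \<rho> (orbit \<sigma> (\<alpha> (par u))) < \<rho> u"
    and "e \<in> edges (D - B) \<alpha>"
  obtains u where "u \<in> verts D \<sigma> - {v0}" "e = orbit \<alpha> (par u)"
proof -
  have fin: "finite D" and "\<sigma> permutes D"
    and invol: "\<And>h. h \<in> D - B \<Longrightarrow> \<alpha> (\<alpha> h) = h"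
    and card_verts: "card (verts D \<sigma>) = card (edges (D - B) \<alpha>) + 1"
    using mob unfolding mobile_def by blast+
  then have perm: "permutation \<sigma>" by (simp add: permutes_imp_permutation)
  have vertex_of: "orbit \<sigma> c = u" if uc: "u \<in> verts D \<sigma>" "c \<in> u" for u c
    using uc permutation_orbit_eq[OF perm] by (auto simp: verts_def)
  define U where "U = verts D \<sigma> - {v0}"
  have parent_edge: "orbit \<alpha> (par u) = {par u, \<alpha> (par u)}" if u: "u \<in> U" for u
    using orbit_involution[of \<alpha> "par u"] invol par u by (auto simp: U_def)
  have "inj_on (\<lambda>u. orbit \<alpha> (par u)) U"
  proof (rule inj_onI)
    fix u u' assume uU: "u \<in> U" "u' \<in> U" and eq: "orbit \<alpha> (par u) = orbit \<alpha> (par u')"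
    have pu: "par u \<in> u" "par u \<in> D - B" "\<rho> (orbit \<sigma> (\<alpha> (par u))) < \<rho> u"
      and pu': "par u' \<in> u'" "par u' \<in> D - B" "\<rho> (orbit \<sigma> (\<alpha> (par u'))) < \<rho> u'"
      using par uU by (auto simp: U_def)
    have V: "u \<in> verts D \<sigma>" "u' \<in> verts D \<sigma>" using uU by (auto simp: U_def)
    have "par u = par u' \<or> par u = \<alpha> (par u')" using eq parent_edge uU by auto
    then show "u = u'"
    proof
      assume "par u = par u'" then show ?thesis using vertex_of V pu pu' by metis
    next
      \<comment> \<open>Opposite ends of one edge would each be the parent of the other, but ranks decrease.\<close>
      assume "par u = \<alpha> (par u')"
      then have "orbit \<sigma> (\<alpha> (par u')) = u" "orbit \<sigma> (\<alpha> (par u)) = u'"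
        using vertex_of V pu pu' invol by metis+
      then have "\<rho> u' < \<rho> u" "\<rho> u < \<rho> u'" using pu(3) pu'(3) by simp_all
      then show ?thesis by (rule less_asym)
    qed
  qed
  moreover have "(\<lambda>u. orbit \<alpha> (par u)) ` U \<subseteq> edges (D - B) \<alpha>"
    using par by (auto simp: U_def edges_def)
  moreover have "card U = card (edges (D - B) \<alpha>)"
    using card_verts \<open>v0 \<in> verts D \<sigma>\<close> fin by (simp add: U_def verts_def)
  moreover have "finite (edges (D - B) \<alpha>)" using fin by (simp add: edges_def)
  ultimately have "(\<lambda>u. orbit \<alpha> (par u)) ` U = edges (D - B) \<alpha>"
    by (metis card_image card_subset_eq)
  then show ?thesis using that \<open>e \<in> edges (D - B) \<alpha>\<close> by (auto simp: U_def)
qed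

lemma mobile_no_subgraph_min_degree_two:
  assumes mob: "mobile D B \<alpha> \<sigma> black" and "S \<subseteq> D - B"
    and closed: "\<And>h. h \<in> S \<Longrightarrow> \<alpha> h \<in> S"
    and branch: "\<And>h. h \<in> S \<Longrightarrow> \<exists>g\<in>S. g \<in> orbit \<sigma> h \<and> g \<noteq> h"
  shows "S = {}"
proof (rule ccontr)
  assume "S \<noteq> {}"
  have fin: "finite D" and "D \<noteq> {}" and "\<sigma> permutes D"
    and invol: "\<And>h. h \<in> D - B \<Longrightarrow> \<alpha> (\<alpha> h) = h"
    using mob unfolding mobile_def by blast+
  then have perm: "permutation \<sigma>" by (simp add: permutes_imp_permutation)
  have vertex_of: "orbit \<sigma> c = u" if uc: "u \<in> verts D \<sigma>" "c \<in> u" for u c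
    using uc permutation_orbit_eq[OF perm] by (auto simp: verts_def)
  obtain x0 where "x0 \<in> D" using \<open>D \<noteq> {}\<close> by blast
  obtain \<rho> :: "'a set \<Rightarrow> nat" and par where par: "\<And>u. u \<in> verts D \<sigma> - {orbit \<sigma> x0} \<Longrightarrow>
      par u \<in> u \<and> par u \<in> D - B \<and> \<rho> (orbit \<sigma> (\<alpha> (par u))) < \<rho> u"
    using mobile_descending_parents[OF mob \<open>x0 \<in> D\<close>] by blast
  have "finite S" using fin \<open>S \<subseteq> D - B\<close> finite_subset by blast
  define R where "R = (\<lambda>g. \<rho> (orbit \<sigma> g)) ` S"
  have "Max R \<in> R" using \<open>finite S\<close> \<open>S \<noteq> {}\<close> by (simp add: R_def)
  then obtain g1 where "g1 \<in> S" and "\<rho> (orbit \<sigma> g1) = Max R" by (auto simp: R_def)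
  then have max: "\<rho> (orbit \<sigma> g) \<le> \<rho> (orbit \<sigma> g1)" if "g \<in> S" for g
    using \<open>finite S\<close> that by (simp add: R_def)
  define v where "v = orbit \<sigma> g1"
  \<comment> \<open>Every edge is the parent edge of its endpoint of larger rank, so at a vertex of maximal rank
    all darts of S there are its parent dart.\<close>
  have parent_dart: "par v = g" if g: "g \<in> S" "g \<in> v" for g
  proof -
    have gD: "g \<in> D - B" using g \<open>S \<subseteq> D - B\<close> by blast
    have "orbit \<sigma> x0 \<in> verts D \<sigma>" "orbit \<alpha> g \<in> edges (D - B) \<alpha>"
      using \<open>x0 \<in> D\<close> gD by (auto simp: verts_def edges_def)
    then obtain u where u: "u \<in> verts D \<sigma> - {orbit \<sigma> x0}" "orbit \<alpha> g = orbit \<alpha> (par u)"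
      using mobile_edge_is_parent_edge[OF mob _ par] by blast
    have vV: "v \<in> verts D \<sigma>" using \<open>g1 \<in> S\<close> \<open>S \<subseteq> D - B\<close> by (auto simp: v_def verts_def)
    have uV: "u \<in> verts D \<sigma>" and pu: "par u \<in> u" "par u \<in> D - B"
      and descent: "\<rho> (orbit \<sigma> (\<alpha> (par u))) < \<rho> u"
      using par[OF u(1)] u(1) by blast+
    have "par u = g \<or> par u = \<alpha> g"
      using u(2) orbit_involution[of \<alpha> g] orbit_involution[of \<alpha> "par u"] invol gD pu(2) by auto
    then show ?thesis
    proof
      assume "par u = g"
      then have "u = v" using vertex_of[OF uV pu(1)] vertex_of[OF vV g(2)] by simp
      then show ?thesis using \<open>par u = g\<close> by simp
    next
      assume "par u = \<alpha> g"
      then have "orbit \<sigma> (\<alpha> g) = u" using vertex_of[OF uV pu(1)] by simp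
      moreover have "orbit \<sigma> (\<alpha> (par u)) = v"
        using \<open>par u = \<alpha> g\<close> invol[OF gD] vertex_of[OF vV g(2)] by simp
      ultimately have "\<rho> v < \<rho> (orbit \<sigma> (\<alpha> g))" using descent by simp
      moreover have "\<rho> (orbit \<sigma> (\<alpha> g)) \<le> \<rho> v" using max closed g(1) by (simp add: v_def)
      ultimately show ?thesis by simp
    qed
  qed
  obtain g2 where "g2 \<in> S" "g2 \<in> v" "g2 \<noteq> g1" using branch[OF \<open>g1 \<in> S\<close>] by (auto simp: v_def)
  moreover have "g1 \<in> v" using permutation_self_in_orbit[OF perm] by (simp add: v_def)
  ultimately show False using parent_dart[OF \<open>g1 \<in> S\<close>] parent_dart[of g2] by simp
qed

lemma branching_mobile_weight_even:
  assumes "even d" and bm: "branching_mobile d D B \<alpha> \<sigma> black w" and "h \<in> D - B"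
  shows "even (w h)"
proof -
  have mob: "mobile D B \<alpha> \<sigma> black"
    and colour: "\<And>h. h \<in> D - B \<Longrightarrow> (if black (orbit \<sigma> h) then w h = 0 else 0 < w h)"
    and vertex_weight: "\<And>v. v \<in> verts D \<sigma> \<Longrightarrow> (if black v then card v = d else (\<Sum>h\<in>v - B. w h) = d)"
    and edge_weight: "\<And>h. h \<in> D - B \<Longrightarrow> w h + w (\<alpha> h) = d - 2"
    using bm unfolding branching_mobile_def N_mobile_def by auto
  then have fin: "finite D" and "\<sigma> permutes D" and "\<alpha> permutes (D - B)"
    and buds_black: "\<And>b. b \<in> B \<Longrightarrow> black (orbit \<sigma> b)"
    unfolding mobile_def by auto
  then have perm: "permutation \<sigma>" by (simp add: permutes_imp_permutation)
  have "even (d - 2)" using \<open>even d\<close> by (cases "2 \<le> d") auto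
  define S where "S = {h \<in> D - B. odd (w h)}"
  have "S = {}"
  proof (rule mobile_no_subgraph_min_degree_two[OF mob])
    show "S \<subseteq> D - B" by (auto simp: S_def)
    show "\<alpha> h \<in> S" if "h \<in> S" for h
    proof -
      have hD: "h \<in> D - B" "odd (w h)" using that by (auto simp: S_def)
      have "w h + w (\<alpha> h) = d - 2" using edge_weight hD(1) by blast
      then have "even (w h + w (\<alpha> h))" using \<open>even (d - 2)\<close> by (simp only:)
      then have "odd (w (\<alpha> h))" using hD(2) by simp
      moreover have "\<alpha> h \<in> D - B" using permutes_in_image[OF \<open>\<alpha> permutes (D - B)\<close>] hD(1) by simp
      ultimately show ?thesis by (simp add: S_def)
    qed
    show "\<exists>g\<in>S. g \<in> orbit \<sigma> h \<and> g \<noteq> h" if "h \<in> S" for h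
    proof -
      have hD: "h \<in> D - B" "odd (w h)" using that by (auto simp: S_def)
      then have white: "\<not> black (orbit \<sigma> h)" using colour[of h] by (auto split: if_splits)
      have no_buds: "orbit \<sigma> h \<inter> B = {}"
      proof (rule equals0I)
        fix b assume "b \<in> orbit \<sigma> h \<inter> B"
        then have "orbit \<sigma> b = orbit \<sigma> h" "black (orbit \<sigma> b)"
          using permutation_orbit_eq[OF perm] buds_black by auto
        then show False using white by simp
      qed
      have sub: "orbit \<sigma> h \<subseteq> D" using permutes_orbit_subset[OF \<open>\<sigma> permutes D\<close>] hD(1) by blast
      have "orbit \<sigma> h \<in> verts D \<sigma>" using hD(1) by (simp add: verts_def)
      then have "sum w (orbit \<sigma> h - B) = d" using vertex_weight white by metis
      then have vertex_sum: "sum w (orbit \<sigma> h) = d" using no_buds by (simp add: Diff_triv)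
      obtain g where "g \<in> orbit \<sigma> h" "odd (w g)" "g \<noteq> h"
      proof (rule even_sum_odd_partner)
        show "finite (orbit \<sigma> h)" using sub fin finite_subset by blast
        show "even (sum w (orbit \<sigma> h))" using vertex_sum \<open>even d\<close> by simp
        show "h \<in> orbit \<sigma> h" by (rule permutation_self_in_orbit[OF perm])
        show "odd (w h)" by (rule hD(2))
      qed
      then show ?thesis using sub no_buds by (auto simp: S_def)
    qed
  qed
  then show ?thesis using \<open>h \<in> D - B\<close> by (auto simp: S_def)
qed

locale dd2_oriented_dangulation =
  fixes d :: nat and D :: "'d set" and \<alpha> \<sigma> :: "'d \<Rightarrow> 'd" and r :: "'d set" and w :: "'d \<Rightarrow> nat"
  assumes dangulation: "rooted_dangulation d D \<alpha> \<sigma> r"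
    and orientation: "dd2_orientation d D \<alpha> \<sigma> r w"
begin

lemma
  shows finite_darts: "finite D"
    and \<alpha>_permutes: "\<alpha> permutes D"
    and \<alpha>_involution: "\<And>h. h \<in> D \<Longrightarrow> \<alpha> (\<alpha> h) = h"
    and \<alpha>_no_fixpoint: "\<And>h. h \<in> D \<Longrightarrow> \<alpha> h \<noteq> h"
    and \<sigma>_permutes: "\<sigma> permutes D"
    and connected: "\<forall>x\<in>D. \<forall>y\<in>D. (x, y) \<in> (map_conn D \<alpha> \<sigma>)\<^sup>*"
    and euler: "card (verts D \<sigma>) + card (faces D \<alpha> \<sigma>) = card (edges D \<alpha>) + 2"
    and face_degree: "\<And>f. f \<in> faces D \<alpha> \<sigma> \<Longrightarrow> card f = d"
    and root_face: "r \<in> faces D \<alpha> \<sigma>"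
    and edge_weight: "\<And>h. h \<in> D \<Longrightarrow> w h + w (\<alpha> h) = (if outer_dart \<alpha> r h then 1 else d - 2)"
    and vertex_weight: "\<And>v. v \<in> verts D \<sigma> \<Longrightarrow> sum w v = (if outer_vertex r v then 1 else d)"
  using dangulation orientation
  unfolding rooted_dangulation_def planar_map_def dd2_orientation_def by auto

lemma perm_\<sigma>: "permutation \<sigma>"
  using finite_darts \<sigma>_permutes by (rule permutes_imp_permutation)

lemma \<alpha>_in_darts: "h \<in> D \<Longrightarrow> \<alpha> h \<in> D"
  using \<alpha>_permutes by (simp add: permutes_in_image)

lemma edge_orbit: "h \<in> D \<Longrightarrow> orbit \<alpha> h = {h, \<alpha> h}"
  by (simp add: orbit_involution \<alpha>_involution)

lemma outer_dart_\<alpha>: "h \<in> D \<Longrightarrow> outer_dart \<alpha> r (\<alpha> h) \<longleftrightarrow> outer_dart \<alpha> r h"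
  using edge_orbit \<alpha>_in_darts \<alpha>_involution unfolding outer_dart_def by (simp add: insert_commute)

lemma root_face_subset: "r \<subseteq> D"
  using root_face permutes_orbit_subset[OF permutes_compose[OF \<alpha>_permutes \<sigma>_permutes]]
  by (auto simp: faces_def)

lemma outer_dart_at_outer_vertex:
  assumes "h \<in> D" "outer_dart \<alpha> r h"
  shows "outer_vertex r (orbit \<sigma> h)"
proof -
  have "h \<in> r \<or> \<alpha> h \<in> r" using assms edge_orbit unfolding outer_dart_def by auto
  then show ?thesis
  proof
    assume "h \<in> r"
    then show ?thesis using permutation_self_in_orbit[OF perm_\<sigma>] unfolding outer_vertex_def by blast
  next
    \<comment> \<open>Along the root face, \<alpha> h is followed by \<sigma> h, a dart at the vertex of h.\<close>
    assume "\<alpha> h \<in> r"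
    obtain x where "r = orbit (\<sigma> \<circ> \<alpha>) x" using root_face by (auto simp: faces_def)
    then have "\<sigma> (\<alpha> (\<alpha> h)) \<in> r" using \<open>\<alpha> h \<in> r\<close> orbit.step by fastforce
    then show ?thesis using \<alpha>_involution[OF assms(1)] orbit.base[of \<sigma> h]
      unfolding outer_vertex_def by auto
  qed
qed

definition outer_darts :: "'d set" where
  "outer_darts = {h \<in> D. outer_dart \<alpha> r h}"

definition outer_verts :: "'d set set" where
  "outer_verts = {v \<in> verts D \<sigma>. outer_vertex r v}"

definition outer_vertex_darts :: "'d set" where
  "outer_vertex_darts = {h \<in> D. outer_vertex r (orbit \<sigma> h)}"

lemma card_darts_faces: "card D = d * card (faces D \<alpha> \<sigma>)"
proof -
  have perm: "permutation (\<sigma> \<circ> \<alpha>)"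
    using finite_darts permutes_compose[OF \<alpha>_permutes \<sigma>_permutes] by (rule permutes_imp_permutation)
  have "card D = (\<Sum>f\<in>faces D \<alpha> \<sigma>. card f)"
    using sum_over_orbits[OF perm finite_darts, of "\<lambda>_. 1::nat"]
      permutes_orbit_subset[OF permutes_compose[OF \<alpha>_permutes \<sigma>_permutes]]
    by (simp add: faces_def)
  then show ?thesis using face_degree by simp
qed

lemma card_darts_edges: "card D = 2 * card (edges D \<alpha>)"
proof -
  have perm: "permutation \<alpha>" using finite_darts \<alpha>_permutes by (rule permutes_imp_permutation)
  have "card D = (\<Sum>e\<in>edges D \<alpha>. card e)"
    using sum_over_orbits[OF perm finite_darts, of "\<lambda>_. 1::nat"] permutes_orbit_subset[OF \<alpha>_permutes]
    by (simp add: edges_def)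
  also have "\<dots> = (\<Sum>e\<in>edges D \<alpha>. 2)"
  proof (rule sum.cong)
    fix e assume "e \<in> edges D \<alpha>"
    then obtain h where "h \<in> D" "e = orbit \<alpha> h" by (auto simp: edges_def)
    then show "card e = 2" using edge_orbit \<alpha>_no_fixpoint[of h] by auto
  qed simp
  finally show ?thesis by simp
qed

lemma total_weight_by_vertices:
  "sum w D = card outer_verts + d * card (verts D \<sigma> - outer_verts)"
proof -
  have "sum w D = (\<Sum>v\<in>verts D \<sigma>. sum w v)"
    using sum_over_orbits[OF perm_\<sigma> finite_darts] permutes_orbit_subset[OF \<sigma>_permutes]
    by (simp add: verts_def)
  also have "\<dots> = (\<Sum>v\<in>verts D \<sigma>. if outer_vertex r v then 1 else d)"
    by (rule sum.cong) (simp_all add: vertex_weight)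
  also have "\<dots> = card outer_verts + d * card (verts D \<sigma> - outer_verts)"
  proof -
    have "verts D \<sigma> \<inter> {v. outer_vertex r v} = outer_verts"
      "verts D \<sigma> \<inter> - {v. outer_vertex r v} = verts D \<sigma> - outer_verts"
      by (auto simp: outer_verts_def)
    moreover have "finite (verts D \<sigma>)" using finite_darts by (simp add: verts_def)
    ultimately show ?thesis by (simp add: sum.If_cases)
  qed
  finally show ?thesis .
qed

lemma total_weight_by_edges:
  "2 * sum w D = card outer_darts + (d - 2) * card (D - outer_darts)"
proof -
  have "sum (w \<circ> \<alpha>) D = sum w D" by (rule sum.permute[OF \<alpha>_permutes, symmetric])
  then have "2 * sum w D = (\<Sum>h\<in>D. w h + w (\<alpha> h))" by (simp add: sum.distrib)
  also have "\<dots> = (\<Sum>h\<in>D. if outer_dart \<alpha> r h then 1 else d - 2)"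
    by (rule sum.cong) (simp_all add: edge_weight)
  also have "\<dots> = card outer_darts + (d - 2) * card (D - outer_darts)"
  proof -
    have "D \<inter> {h. outer_dart \<alpha> r h} = outer_darts" "D \<inter> - {h. outer_dart \<alpha> r h} = D - outer_darts"
      by (auto simp: outer_darts_def)
    then show ?thesis using finite_darts by (simp add: sum.If_cases)
  qed
  finally show ?thesis .
qed

lemma weight_outer_darts: "2 * sum w outer_darts = card outer_darts"
proof -
  have "\<alpha> ` outer_darts \<subseteq> outer_darts"
    using outer_dart_\<alpha> \<alpha>_in_darts unfolding outer_darts_def by auto
  moreover have "outer_darts \<subseteq> \<alpha> ` outer_darts"
  proof
    fix h assume "h \<in> outer_darts"
    then have "\<alpha> h \<in> outer_darts" "h = \<alpha> (\<alpha> h)"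
      using outer_dart_\<alpha> \<alpha>_in_darts \<alpha>_involution unfolding outer_darts_def by auto
    then show "h \<in> \<alpha> ` outer_darts" by blast
  qed
  ultimately have "\<alpha> ` outer_darts = outer_darts" by (rule subset_antisym)
  moreover have "inj_on \<alpha> outer_darts"
    using inj_on_subset[OF permutes_inj[OF \<alpha>_permutes] subset_UNIV] .
  ultimately have "sum (w \<circ> \<alpha>) outer_darts = sum w outer_darts"
    using sum.reindex[of \<alpha> outer_darts w] by simp
  then have "2 * sum w outer_darts = (\<Sum>h\<in>outer_darts. w h + w (\<alpha> h))" by (simp add: sum.distrib)
  also have "\<dots> = (\<Sum>h\<in>outer_darts. 1)"
    by (rule sum.cong) (simp_all add: edge_weight outer_darts_def)
  finally show ?thesis by simp
qed

lemma weight_outer_vertex_darts: "sum w outer_vertex_darts = card outer_verts"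
proof -
  have closed: "orbit \<sigma> x \<subseteq> outer_vertex_darts" if "x \<in> outer_vertex_darts" for x
    using that permutes_orbit_subset[OF \<sigma>_permutes] permutation_orbit_eq[OF perm_\<sigma>]
    by (fastforce simp: outer_vertex_darts_def)
  have "orbit \<sigma> ` outer_vertex_darts = outer_verts"
    by (auto simp: outer_vertex_darts_def outer_verts_def verts_def)
  then have "sum w outer_vertex_darts = (\<Sum>v\<in>outer_verts. sum w v)"
    using sum_over_orbits[OF perm_\<sigma> _ closed] finite_darts by (simp add: outer_vertex_darts_def)
  also have "\<dots> = (\<Sum>v\<in>outer_verts. 1)"
    by (rule sum.cong) (simp_all add: vertex_weight outer_verts_def)
  finally show ?thesis by simp
qed

lemma root_face_degree_le_outer_darts: "d \<le> card outer_darts"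
proof -
  have "r \<subseteq> outer_darts"
    using root_face_subset edge_orbit unfolding outer_darts_def outer_dart_def by auto
  then have "card r \<le> card outer_darts"
    using finite_darts by (intro card_mono) (auto simp: outer_darts_def)
  then show ?thesis using face_degree[OF root_face] by simp
qed

lemma outer_weight_balance:
  assumes "2 \<le> d"
  shows "int (card outer_darts) + (int d - 1) * int (sum w (outer_vertex_darts - outer_darts))
           = 2 * int d"
proof -
  \<comment> \<open>Euler's formula, with darts counted by faces and by edges and the total weight counted by
    vertices and by edges.\<close>
  define N F E V Vo W Oc X where "N = int (card D)" and "F = int (card (faces D \<alpha> \<sigma>))"
    and "E = int (card (edges D \<alpha>))" and "V = int (card (verts D \<sigma>))" and "Vo = int (card outer_verts)"
    and "W = int (sum w D)" and "Oc = int (card outer_darts)"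
    and "X = int (sum w (outer_vertex_darts - outer_darts))"
  have "outer_darts \<subseteq> outer_vertex_darts"
    using outer_dart_at_outer_vertex by (auto simp: outer_darts_def outer_vertex_darts_def)
  moreover have "finite outer_vertex_darts" using finite_darts by (simp add: outer_vertex_darts_def)
  ultimately have "sum w outer_vertex_darts = sum w outer_darts + sum w (outer_vertex_darts - outer_darts)"
    by (simp add: sum.subset_diff)
  then have "2 * card outer_verts = card outer_darts + 2 * sum w (outer_vertex_darts - outer_darts)"
    using weight_outer_darts weight_outer_vertex_darts by simp
  then have outer_verts: "2 * Vo = Oc + 2 * X" unfolding Vo_def Oc_def X_def by linarith
  have "card (verts D \<sigma> - outer_verts) = card (verts D \<sigma>) - card outer_verts"
    using finite_darts by (simp add: verts_def outer_verts_def card_Diff_subset)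
  moreover have "card outer_verts \<le> card (verts D \<sigma>)"
    using finite_darts by (simp add: verts_def outer_verts_def card_mono)
  ultimately have by_vertices: "W = Vo + int d * (V - Vo)"
    using total_weight_by_vertices by (simp add: W_def Vo_def V_def of_nat_diff del: of_nat_sum)
  have "card (D - outer_darts) = card D - card outer_darts"
    using finite_darts by (simp add: outer_darts_def card_Diff_subset)
  moreover have "card outer_darts \<le> card D"
    using finite_darts by (simp add: outer_darts_def card_mono)
  moreover have "int (2 * sum w D) = int (card outer_darts + (d - 2) * card (D - outer_darts))"
    using total_weight_by_edges by (rule arg_cong)
  ultimately have by_edges: "2 * W = Oc + (int d - 2) * (N - Oc)"
    using assms by (simp add: W_def Oc_def N_def of_nat_diff del: of_nat_sum)
  have "V + F = E + 2" using euler by (simp add: V_def F_def E_def)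
  moreover have "N = int d * F" using card_darts_faces by (simp add: N_def F_def)
  moreover have "N = 2 * E" using card_darts_edges by (simp add: N_def E_def)
  ultimately have "Oc + (int d - 1) * X = 2 * int d"
    using outer_verts by_vertices by_edges by algebra
  then show ?thesis by (simp add: Oc_def X_def)
qed

lemma weight_zero_at_outer_vertex:
  assumes "even d" "4 \<le> d" "h \<in> D" "outer_vertex r (orbit \<sigma> h)" "\<not> outer_dart \<alpha> r h"
  shows "w h = 0"
proof -
  define X where "X = sum w (outer_vertex_darts - outer_darts)"
  have balance: "int (card outer_darts) + (int d - 1) * int X = 2 * int d"
    using outer_weight_balance assms(2) by (simp add: X_def)
  \<comment> \<open>The number of outer darts is even and at least d, which leaves no room for X > 0.\<close>
  have "X = 0"
  proof (rule ccontr)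
    assume "X \<noteq> 0"
    then consider "X = 1" | "2 \<le> X" by linarith
    then show False
    proof cases
      case 1
      then have "card outer_darts = d + 1" using balance by simp
      then show False using weight_outer_darts \<open>even d\<close> by presburger
    next
      case 2
      define P where "P = (int d - 1) * int X"
      have "(int d - 1) * 2 \<le> P" unfolding P_def using 2 assms(2) by (intro mult_left_mono) auto
      then have "2 * int d - 2 \<le> P" by (simp add: algebra_simps)
      then have "int (card outer_darts) \<le> 2" using balance unfolding P_def[symmetric] by linarith
      then show False using root_face_degree_le_outer_darts assms(2) by linarith
    qed
  qed
  moreover have "h \<in> outer_vertex_darts - outer_darts"
    using assms(3-5) by (simp add: outer_vertex_darts_def outer_darts_def)
  moreover have "finite (outer_vertex_darts - outer_darts)"
    using finite_darts by (simp add: outer_vertex_darts_def)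
  ultimately show ?thesis by (simp add: X_def)
qed

lemma minimal_orientation_weight_even:
  assumes "even d" "4 \<le> d" and minimal: "minimal_orientation D \<alpha> \<sigma> r w"
    and "h \<in> D" "\<not> outer_dart \<alpha> r h"
  shows "even (w h)"
proof (rule ccontr)
  assume "odd (w h)"
  define S where "S = {h \<in> D. \<not> outer_dart \<alpha> r h \<and> odd (w h)}"
  have "S \<subseteq> D" "finite S" "S \<noteq> {}"
    using finite_darts \<open>h \<in> D\<close> \<open>odd (w h)\<close> assms(5) by (auto simp: S_def)
  have pos: "0 < w g" if "g \<in> S" for g using that by (auto simp: S_def intro: odd_pos)
  have closed: "\<alpha> g \<in> S" if "g \<in> S" for g
  proof -
    have g: "g \<in> D" "\<not> outer_dart \<alpha> r g" "odd (w g)" using that by (auto simp: S_def)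
    then have "w g + w (\<alpha> g) = d - 2" using edge_weight by simp
    moreover have "even (d - 2)" using \<open>even d\<close> \<open>4 \<le> d\<close> by simp
    ultimately have "odd (w (\<alpha> g))" using g(3) by (metis even_add)
    then show ?thesis using g \<alpha>_in_darts outer_dart_\<alpha> by (simp add: S_def)
  qed
  have branch: "\<exists>g'\<in>S. g' \<in> orbit \<sigma> g \<and> g' \<noteq> g" if "g \<in> S" for g
  proof -
    have g: "g \<in> D" "\<not> outer_dart \<alpha> r g" "odd (w g)" using that by (auto simp: S_def)
    then have inner: "\<not> outer_vertex r (orbit \<sigma> g)" using weight_zero_at_outer_vertex assms(1,2) by force
    have sub: "orbit \<sigma> g \<subseteq> D" using permutes_orbit_subset[OF \<sigma>_permutes g(1)] .
    have "sum w (orbit \<sigma> g) = d" using vertex_weight[of "orbit \<sigma> g"] g(1) inner by (simp add: verts_def)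
    obtain g' where g': "g' \<in> orbit \<sigma> g" "odd (w g')" "g' \<noteq> g"
    proof (rule even_sum_odd_partner)
      show "finite (orbit \<sigma> g)" using sub finite_darts finite_subset by blast
      show "even (sum w (orbit \<sigma> g))" using \<open>sum w (orbit \<sigma> g) = d\<close> \<open>even d\<close> by simp
      show "g \<in> orbit \<sigma> g" by (rule permutation_self_in_orbit[OF perm_\<sigma>])
      show "odd (w g)" by (rule g(3))
    qed
    have "orbit \<sigma> g' = orbit \<sigma> g" using permutation_orbit_eq[OF perm_\<sigma> g'(1)] .
    moreover have "g' \<in> D" using sub g'(1) by blast
    ultimately have "\<not> outer_dart \<alpha> r g'" using outer_dart_at_outer_vertex inner by metis
    then show ?thesis using g' sub by (auto simp: S_def)
  qed
  obtain hs where hs: "directed_circuit D \<alpha> \<sigma> w hs" "set hs \<subseteq> S"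
    using exists_directed_circuit[where \<alpha> = \<alpha> and w = w, OF perm_\<sigma> \<alpha>_involution
        \<open>finite S\<close> \<open>S \<subseteq> D\<close> \<open>S \<noteq> {}\<close> closed pos branch]
    by blast
  \<comment> \<open>All darts of the circuit are ingoing, so it can be run in both directions; the root face lies
    to the right of one of them.\<close>
  have reverse: "directed_circuit D \<alpha> \<sigma> w (rev (map \<alpha> hs))"
    using directed_circuit_reverse[OF hs(1) _ \<alpha>_involution \<alpha>_in_darts] hs(2) pos by blast
  obtain x where "r = orbit (\<sigma> \<circ> \<alpha>) x" using root_face by (auto simp: faces_def)
  then have "r \<noteq> {}" by (simp add: orbit_nonempty)
  then obtain y where "y \<in> r" by blast
  have "hs \<noteq> []" using hs(1) by (simp add: directed_circuit_def)
  then have "y \<in> right_side \<alpha> \<sigma> (set hs) \<union> right_side \<alpha> \<sigma> (\<alpha> ` set hs)"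
    using right_side_cover[OF connected \<alpha>_involution] hs \<open>S \<subseteq> D\<close> \<open>y \<in> r\<close> root_face_subset
    by (meson hd_in_set subset_iff)
  then have "ccw_circuit D \<alpha> \<sigma> r w hs \<or> ccw_circuit D \<alpha> \<sigma> r w (rev (map \<alpha> hs))"
    using hs(1) reverse \<open>y \<in> r\<close> unfolding ccw_circuit_def by auto
  then show False using minimal unfolding minimal_orientation_def by blast
qed

end

theorem proposition16:
  fixes d :: nat
  assumes "even d" and "d \<ge> 4"
  shows "(\<forall>(D :: 'a set) B \<alpha> \<sigma> black w. branching_mobile d D B \<alpha> \<sigma> black w \<longrightarrow>
            (\<forall>h\<in>D - B. even (w h) \<and> w h \<le> d - 2))
       \<and> (\<forall>(D :: 'b set) \<alpha> \<sigma> r w. rooted_dangulation d D \<alpha> \<sigma> r \<and>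
            dd2_orientation d D \<alpha> \<sigma> r w \<and> minimal_orientation D \<alpha> \<sigma> r w \<longrightarrow>
            (\<forall>h\<in>D. \<not> outer_dart \<alpha> r h \<longrightarrow> even (w h)))"
proof (intro conjI allI impI ballI)
  fix D :: "'a set" and B \<alpha> \<sigma> black and w :: "'a \<Rightarrow> nat" and h
  assume bm: "branching_mobile d D B \<alpha> \<sigma> black w" and "h \<in> D - B"
  then show "even (w h)" by (rule branching_mobile_weight_even[OF \<open>even d\<close>])
  have "w h + w (\<alpha> h) = d - 2" using bm \<open>h \<in> D - B\<close> by (simp add: branching_mobile_def)
  then show "w h \<le> d - 2" by linarith
next
  fix D :: "'b set" and \<alpha> \<sigma> r and w :: "'b \<Rightarrow> nat" and h
  assume map: "rooted_dangulation d D \<alpha> \<sigma> r \<and> dd2_orientation d D \<alpha> \<sigma> r w \<and> minimal_orientation D \<alpha> \<sigma> r w"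
    and "h \<in> D" "\<not> outer_dart \<alpha> r h"
  then have "dd2_oriented_dangulation d D \<alpha> \<sigma> r w" by (simp add: dd2_oriented_dangulation_def)
  from this assms show "even (w h)"
    by (rule dd2_oriented_dangulation.minimal_orientation_weight_even)
      (use map \<open>h \<in> D\<close> \<open>\<not> outer_dart \<alpha> r h\<close> in simp_all)
qed

end
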